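(* Let $S\in\mathrm{Sp}(2n,\mathbb R)$ with largest singular value $e^{s}$, let $\bm f\in\mathbb Z_{\ge0}^n$ with $f_{\max}=\max_if_i$, and let $M=S\,\mathrm{diag}(D,D)\,S^T$ where $D=\mathrm{diag}(\tfrac12+f_1,\dots,\tfrac12+f_n)$ (the covariance matrix of $\mathcal U_S|\bm f\rangle$). Let $\varepsilon\ge0$ and let $F$ be a real symmetric matrix with $\|F\|\le1$ such that $M'=M+\varepsilon F$ is a valid covariance matrix. If $R'\in\mathrm{Sp}(2n,\mathbb R)$ satisfies $M'=R'\,\mathrm{diag}(D',D')\,R'^T$ for a diagonal matrix $D'$ with positive entries, then $$\|R'\|=\|R'^{-1}\|\le\sqrt{e^{2s}(1+2f_{\max})+2\varepsilon}.$$
   Context: $\mathrm{Sp}(2n,\mathbb R)=\{S\in\mathbb R^{2n\times2n}: S\Omega S^T=\Omega\}$ with $\Omega=\begin{pmatrix}0&I\\-I&0\end{pmatrix}$. A valid covariance matrix is a real symmetric positive-definite $2n\times 2n$ matrix all of whose symplectic eigenvalues are $\ge 1/2$ (the symplectic eigenvalues of $M$ are the $\nu_i>0$ with $M=R\,\mathrm{diag}(\nu,\nu)R^T$ for some $R\in\mathrm{Sp}(2n,\mathbb R)$, by Williamson's theorem). $\|\cdot\|$ is the operator norm. *)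

theory Defs
  imports "HOL-Analysis.Analysis"
begin

text \<open>Real 2n x 2n matrices are indexed by the sum type 'n + 'n: Inl i is the
  i-th position coordinate (first block), Inr i the i-th momentum coordinate.\<close>

definition Omega :: "real ^ ('n::finite + 'n) ^ ('n + 'n)" where
  "Omega = (\<chi> a b. case (a, b) of
      (Inl i, Inr j) \<Rightarrow> (if i = j then 1 else 0)
    | (Inr i, Inl j) \<Rightarrow> (if i = j then -1 else 0)
    | _ \<Rightarrow> 0)"

definition symplectic :: "real ^ ('n::finite + 'n) ^ ('n + 'n) \<Rightarrow> bool" where
  "symplectic S \<longleftrightarrow> S ** Omega ** transpose S = Omega"

definition diag2 :: "('n::finite \<Rightarrow> real) \<Rightarrow> real ^ ('n + 'n) ^ ('n + 'n)" where
  "diag2 d = (\<chi> a b. if a = b then (case a of Inl i \<Rightarrow> d i | Inr i \<Rightarrow> d i) else 0)"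

definition opnorm :: "real ^ 'm::finite ^ 'k::finite \<Rightarrow> real" where
  "opnorm A = onorm (\<lambda>x. A *v x)"

definition largest_singular_value :: "real ^ 'm::finite ^ 'm \<Rightarrow> real" where
  "largest_singular_value A =
     Sup {sqrt l | l. \<exists>v. v \<noteq> 0 \<and> (transpose A ** A) *v v = l *\<^sub>R v}"

definition symmetric_mat :: "real ^ 'm::finite ^ 'm \<Rightarrow> bool" where
  "symmetric_mat M \<longleftrightarrow> transpose M = M"

definition pos_def :: "real ^ 'm::finite ^ 'm \<Rightarrow> bool" where
  "pos_def M \<longleftrightarrow> (\<forall>x. x \<noteq> 0 \<longrightarrow> x \<bullet> (M *v x) > 0)"

definition symplectic_eigenvalues :: "real ^ ('n::finite + 'n) ^ ('n + 'n) \<Rightarrow> real set" where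
  "symplectic_eigenvalues M = {x. \<exists>R \<nu> i. symplectic R \<and> (\<forall>j. \<nu> j > 0) \<and>
       M = R ** diag2 \<nu> ** transpose R \<and> x = \<nu> i}"

definition valid_cov :: "real ^ ('n::finite + 'n) ^ ('n + 'n) \<Rightarrow> bool" where
  "valid_cov M \<longleftrightarrow> symmetric_mat M \<and> pos_def M \<and>
     (\<forall>x \<in> symplectic_eigenvalues M. x \<ge> 1/2)"

end

(* Williamson normal form: M' = R' diag(D', D') R'^T with D' \<ge> 1/2 (validity of M'), so
   (1/2) norm (R'^T x)^2 \<le> x \<bullet> M' x.  On the other hand x \<bullet> M' x is at most
   (1/2 + f_max) norm (S^T x)^2 + \<epsilon> norm x^2 \<le> ((1/2 + f_max) e^(2s) + \<epsilon>) norm x^2, since the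
   largest singular value of S is its operator norm.  This bounds R'^T, hence R'.  Finally
   R'^-1 = \<Omega> R'^T \<Omega>^T for symplectic R' and \<Omega> is orthogonal, so R'^-1 has the norm of R'. *)

theory Submission
  imports Defs
begin

declare transpose_matrix_vector [simp del]

lemma norm_matrix_vector_le_opnorm: "norm (A *v x) \<le> opnorm A * norm x"
  unfolding opnorm_def by (rule onorm) simp

lemma opnorm_le:
  fixes A :: "real ^ 'n::finite ^ 'm::finite"
  assumes "\<And>x. norm (A *v x) \<le> b * norm x"
  shows "opnorm A \<le> b"
  unfolding opnorm_def by (rule onorm_le) (rule assms)

lemma opnorm_nonneg: "0 \<le> opnorm A"
  unfolding opnorm_def by (rule onorm_pos_le) simp

lemma inner_matrix_vector_transpose:
  fixes A :: "real ^ 'n::finite ^ 'm::finite"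
  shows "x \<bullet> (A *v y) = (transpose A *v x) \<bullet> y"
  by (simp add: dot_lmul_matrix transpose_matrix_vector)

lemma opnorm_transpose_le: "opnorm (transpose A) \<le> opnorm A"
proof (rule opnorm_le)
  fix x
  let ?y = "transpose A *v x"
  have "norm ?y * norm ?y = ?y \<bullet> ?y"
    by (metis power2_norm_eq_inner power2_eq_square)
  also have "\<dots> = x \<bullet> (A *v ?y)"
    by (rule inner_matrix_vector_transpose[symmetric])
  also have "\<dots> \<le> norm x * norm (A *v ?y)"
    by (rule norm_cauchy_schwarz)
  also have "\<dots> \<le> norm x * (opnorm A * norm ?y)"
    by (rule mult_left_mono[OF norm_matrix_vector_le_opnorm norm_ge_zero])
  finally have *: "norm ?y * norm ?y \<le> (opnorm A * norm x) * norm ?y"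
    by (simp only: ac_simps)
  show "norm ?y \<le> opnorm A * norm x"
  proof (cases "?y = 0")
    case True
    then show ?thesis
      using opnorm_nonneg[of A] by simp
  next
    case False
    then show ?thesis
      using mult_right_le_imp_le[OF *] by simp
  qed
qed

lemma opnorm_transpose: "opnorm (transpose A) = opnorm A"
  using opnorm_transpose_le[of A] opnorm_transpose_le[of "transpose A"] by simp

lemma norm_orthogonal_matrix_vector:
  "orthogonal_matrix Q \<Longrightarrow> norm (Q *v x) = norm (x :: real ^ 'n::finite)"
  using orthogonal_transformation_matrix[of "(*v) Q"]
  by (simp add: orthogonal_transformation_norm)

lemma opnorm_orthogonal_mult_left:
  "orthogonal_matrix Q \<Longrightarrow> opnorm (Q ** A) = opnorm A"
  by (simp add: opnorm_def onorm_def norm_orthogonal_matrix_vector flip: matrix_vector_mul_assoc)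

lemma opnorm_orthogonal_mult_right:
  assumes "orthogonal_matrix Q"
  shows "opnorm (A ** Q) = opnorm A"
proof -
  have "opnorm (A ** Q) = opnorm (transpose Q ** transpose A)"
    by (metis matrix_transpose_mul opnorm_transpose)
  also have "\<dots> = opnorm A"
    using assms by (simp add: opnorm_orthogonal_mult_left opnorm_transpose)
  finally show ?thesis .
qed

lemma opnorm_attained:
  fixes A :: "real ^ 'n::finite ^ 'm::finite"
  obtains x where "norm x = 1" "norm (A *v x) = opnorm A"
proof -
  have "continuous_on (sphere 0 1) (\<lambda>y. norm (A *v y))"
    by (intro continuous_on_norm matrix_vector_mult_linear_continuous_on)
  moreover have "sphere (0 :: real ^ 'n) 1 \<noteq> {}"
    by simp
  ultimately obtain x where x: "x \<in> sphere 0 1"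
    and max: "\<And>y. y \<in> sphere 0 1 \<Longrightarrow> norm (A *v y) \<le> norm (A *v x)"
    using continuous_attains_sup[OF compact_sphere] by blast
  have "opnorm A \<le> norm (A *v x)"
  proof (rule opnorm_le)
    fix y :: "real ^ 'n"
    show "norm (A *v y) \<le> norm (A *v x) * norm y"
    proof (cases "y = 0")
      case False
      have "norm (A *v y) / norm y = norm (A *v ((1 / norm y) *\<^sub>R y))"
        by (simp add: matrix_vector_mult_scaleR divide_inverse_commute)
      also have "\<dots> \<le> norm (A *v x)"
        using False by (intro max) simp
      finally show ?thesis
        using False by (simp add: pos_divide_le_eq)
    qed simp
  qed
  moreover have "norm (A *v x) \<le> opnorm A"
    using norm_matrix_vector_le_opnorm[of A x] x by simp
  ultimately show thesis
    using x by (intro that) auto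
qed

lemma eigenvalue_transpose_mult_le:
  assumes "v \<noteq> 0" "(transpose A ** A) *v v = l *\<^sub>R v"
  shows "l \<le> (opnorm A)\<^sup>2"
proof -
  have "l * (v \<bullet> v) = (A *v v) \<bullet> (A *v v)"
    by (metis assms(2) inner_matrix_vector_transpose inner_scaleR_right inner_commute matrix_vector_mul_assoc)
  also have "\<dots> \<le> ((opnorm A)\<^sup>2) * (v \<bullet> v)"
    using norm_matrix_vector_le_opnorm[of A v]
    by (metis norm_ge_zero power_mono power_mult_distrib power2_norm_eq_inner)
  finally show ?thesis
    using assms(1) by simp
qed

lemma eq_scaleR_if_norm_le_inner_unit:
  fixes w x :: "'a::real_inner"
  assumes "norm x = 1" "norm w \<le> x \<bullet> w"
  shows "w = (x \<bullet> w) *\<^sub>R x"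
proof -
  define r where "r = x \<bullet> w"
  have "(norm (w - r *\<^sub>R x))\<^sup>2 = (norm w)\<^sup>2 - 2 * r * (x \<bullet> w) + r\<^sup>2 * (norm x)\<^sup>2"
    by (simp add: power2_norm_eq_inner inner_diff_left inner_diff_right inner_commute[of w x] algebra_simps)
      (simp add: power2_eq_square)
  also have "\<dots> \<le> 0"
    using power_mono[OF assms(2) norm_ge_zero, of 2] assms(1) by (simp add: r_def power2_eq_square)
  finally have "w = r *\<^sub>R x"
    by simp
  then show ?thesis
    by (simp only: r_def)
qed

text \<open>A unit vector x on which A attains its norm c is an eigenvector of A^T A for c^2:
  w = A^T A x satisfies x \<bullet> w = c^2 and norm w \<le> c^2, so Cauchy--Schwarz is sharp.\<close>

lemma transpose_mult_eigenvector_opnorm: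
  obtains x where "x \<noteq> 0" "(transpose A ** A) *v x = (opnorm A)\<^sup>2 *\<^sub>R x"
proof -
  obtain x where x: "norm x = 1" "norm (A *v x) = opnorm A"
    by (rule opnorm_attained)
  define c where "c = opnorm A"
  define w where "w = (transpose A ** A) *v x"
  have "x \<bullet> w = (A *v x) \<bullet> (A *v x)"
    by (metis w_def inner_matrix_vector_transpose transpose_transpose matrix_vector_mul_assoc)
  then have xw: "x \<bullet> w = c\<^sup>2"
    using x by (metis c_def power2_norm_eq_inner)
  have "norm w \<le> opnorm (transpose A) * norm (A *v x)"
    by (simp add: w_def norm_matrix_vector_le_opnorm flip: matrix_vector_mul_assoc)
  then have "norm w \<le> c\<^sup>2"
    using x by (simp add: opnorm_transpose c_def power2_eq_square)
  then have "w = (x \<bullet> w) *\<^sub>R x"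
    by (intro eq_scaleR_if_norm_le_inner_unit) (simp_all add: x(1) xw)
  then have "w = c\<^sup>2 *\<^sub>R x"
    unfolding xw .
  show thesis
  proof (rule that)
    show "x \<noteq> 0"
      using x(1) by auto
    show "(transpose A ** A) *v x = (opnorm A)\<^sup>2 *\<^sub>R x"
      using \<open>w = c\<^sup>2 *\<^sub>R x\<close> by (simp only: w_def c_def)
  qed
qed

lemma largest_singular_value_eq_opnorm: "largest_singular_value A = opnorm A"
  unfolding largest_singular_value_def
proof (rule cSup_eq_maximum)
  obtain x where "x \<noteq> 0" "(transpose A ** A) *v x = (opnorm A)\<^sup>2 *\<^sub>R x"
    by (rule transpose_mult_eigenvector_opnorm)
  moreover have "opnorm A = sqrt ((opnorm A)\<^sup>2)"
    using opnorm_nonneg[of A] by simp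
  ultimately show "opnorm A \<in> {sqrt l |l. \<exists>v. v \<noteq> 0 \<and> (transpose A ** A) *v v = l *\<^sub>R v}"
    by blast
next
  fix r
  assume "r \<in> {sqrt l |l. \<exists>v. v \<noteq> 0 \<and> (transpose A ** A) *v v = l *\<^sub>R v}"
  then obtain l v where r: "r = sqrt l" and "v \<noteq> 0" "(transpose A ** A) *v v = l *\<^sub>R v"
    by blast
  then have "sqrt l \<le> sqrt ((opnorm A)\<^sup>2)"
    by (intro real_sqrt_le_mono eigenvalue_transpose_mult_le)
  then show "r \<le> opnorm A"
    using opnorm_nonneg[of A] r by simp
qed

lemma sum_UNIV_Plus:
  "sum g (UNIV :: ('a::finite + 'b::finite) set) = (\<Sum>i\<in>UNIV. g (Inl i)) + (\<Sum>j\<in>UNIV. g (Inr j))"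
  by (subst UNIV_Plus_UNIV[symmetric], subst sum.Plus) (auto simp: o_def)

lemma orthogonal_matrix_Omega: "orthogonal_matrix (Omega :: real ^ ('n::finite + 'n) ^ ('n + 'n))"
proof -
  have delta_square: "(if P then u else 0) * (if P then v else 0) = (if P then u * v else (0::real))"
    for P u v by simp
  have "(\<Sum>k\<in>UNIV. Omega $ k $ a * Omega $ k $ b) = (if a = b then 1 else (0::real))"
    for a b :: "'n + 'n"
    unfolding Omega_def sum_UNIV_Plus
    by (cases a; cases b) (auto intro!: sum.neutral simp: delta_square)
  then show ?thesis
    by (simp add: orthogonal_matrix vec_eq_iff matrix_matrix_mult_def transpose_def mat_def)
qed

lemma matrix_inv_eq_right_inverse:
  fixes A B :: "'a::field ^ 'n::finite ^ 'n"
  assumes "A ** B = mat 1"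
  shows "matrix_inv A = B"
proof -
  have "\<exists>A'. A ** A' = mat 1 \<and> A' ** A = mat 1"
    using assms matrix_left_right_inverse1[OF assms] by blast
  then have inv: "A ** matrix_inv A = mat 1 \<and> matrix_inv A ** A = mat 1"
    unfolding matrix_inv_def by (rule someI_ex)
  have "matrix_inv A = matrix_inv A ** (A ** B)"
    using assms by simp
  also have "\<dots> = B"
    using inv by (simp add: matrix_mul_assoc)
  finally show ?thesis .
qed

lemma matrix_inv_symplectic:
  assumes "symplectic R"
  shows "matrix_inv R = Omega ** transpose R ** transpose Omega"
proof (rule matrix_inv_eq_right_inverse)
  have "R ** (Omega ** transpose R ** transpose Omega) = (R ** Omega ** transpose R) ** transpose Omega"
    by (simp add: matrix_mul_assoc)
  also have "\<dots> = Omega ** transpose Omega"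
    using assms by (simp add: symplectic_def)
  also have "\<dots> = mat 1"
    using orthogonal_matrix_Omega unfolding orthogonal_matrix_def by blast
  finally show "R ** (Omega ** transpose R ** transpose Omega) = mat 1" .
qed

lemma opnorm_matrix_inv_symplectic:
  "symplectic R \<Longrightarrow> opnorm (matrix_inv R) = opnorm R"
  by (simp add: matrix_inv_symplectic orthogonal_matrix_Omega opnorm_orthogonal_mult_left
      opnorm_orthogonal_mult_right opnorm_transpose)

lemma diag2_mult_vector: "diag2 d *v y = (\<chi> a. case_sum d d a * y $ a)"
  by (simp add: vec_eq_iff diag2_def matrix_vector_mult_def if_distrib[of "\<lambda>u. u * _"] cong: if_cong)

lemma inner_diag2: "y \<bullet> (diag2 d *v y) = (\<Sum>a\<in>UNIV. case_sum d d a * (y $ a)\<^sup>2)"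
  by (simp add: diag2_mult_vector inner_vec_def power2_eq_square ac_simps)

lemma quadratic_form_diag2_lower:
  assumes "\<And>i. m \<le> d i"
  shows "m * (y \<bullet> y) \<le> y \<bullet> (diag2 d *v y)"
proof -
  have "m * (y \<bullet> y) = (\<Sum>a\<in>UNIV. m * (y $ a)\<^sup>2)"
    by (simp add: inner_vec_def sum_distrib_left power2_eq_square)
  also have "\<dots> \<le> (\<Sum>a\<in>UNIV. case_sum d d a * (y $ a)\<^sup>2)"
    using assms by (intro sum_mono mult_right_mono) (simp_all split: sum.split)
  finally show ?thesis
    by (simp only: inner_diag2)
qed

lemma quadratic_form_diag2_upper:
  assumes "\<And>i. d i \<le> m"
  shows "y \<bullet> (diag2 d *v y) \<le> m * (y \<bullet> y)"
proof -
  have "y \<bullet> (diag2 d *v y) \<le> (\<Sum>a\<in>UNIV. m * (y $ a)\<^sup>2)"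
    unfolding inner_diag2 using assms by (intro sum_mono mult_right_mono) (simp_all split: sum.split)
  also have "\<dots> = m * (y \<bullet> y)"
    by (simp add: inner_vec_def sum_distrib_left power2_eq_square)
  finally show ?thesis .
qed

lemma quadratic_form_congruence:
  fixes A :: "real ^ 'n::finite ^ 'm::finite" and G :: "real ^ 'n ^ 'n"
  shows "x \<bullet> ((A ** G ** transpose A) *v x) = (transpose A *v x) \<bullet> (G *v (transpose A *v x))"
proof -
  have "(A ** G ** transpose A) *v x = A *v (G *v (transpose A *v x))"
    by (simp add: matrix_vector_mul_assoc matrix_mul_assoc)
  then show ?thesis
    by (simp only: inner_matrix_vector_transpose[of x A])
qed

lemma quadratic_form_le_opnorm: "x \<bullet> (A *v x) \<le> opnorm A * (x \<bullet> x)"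
proof -
  have "x \<bullet> (A *v x) \<le> norm x * norm (A *v x)"
    by (rule norm_cauchy_schwarz)
  also have "\<dots> \<le> norm x * (opnorm A * norm x)"
    by (rule mult_left_mono[OF norm_matrix_vector_le_opnorm norm_ge_zero])
  also have "\<dots> = opnorm A * (x \<bullet> x)"
    by (simp add: dot_square_norm power2_eq_square)
  finally show ?thesis .
qed

lemma quadratic_form_congruence_diag2_upper:
  assumes "\<And>i. d i \<le> c" "0 \<le> c"
  shows "x \<bullet> ((S ** diag2 d ** transpose S) *v x) \<le> c * (opnorm S)\<^sup>2 * (x \<bullet> x)"
proof -
  let ?y = "transpose S *v x"
  have "x \<bullet> ((S ** diag2 d ** transpose S) *v x) \<le> c * (?y \<bullet> ?y)"
    unfolding quadratic_form_congruence by (rule quadratic_form_diag2_upper) (rule assms(1))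
  also have "?y \<bullet> ?y \<le> (opnorm S)\<^sup>2 * (x \<bullet> x)"
    using norm_matrix_vector_le_opnorm[of "transpose S" x]
    by (metis norm_ge_zero opnorm_transpose power_mono power_mult_distrib power2_norm_eq_inner)
  then have "c * (?y \<bullet> ?y) \<le> c * ((opnorm S)\<^sup>2 * (x \<bullet> x))"
    using assms(2) by (rule mult_left_mono)
  finally show ?thesis
    by (simp add: ac_simps)
qed

lemma quadratic_form_perturbed_congruence_le:
  assumes "\<And>i. d i \<le> c" "0 \<le> c" "0 \<le> \<epsilon>"
  shows "x \<bullet> ((S ** diag2 d ** transpose S + \<epsilon> *\<^sub>R F) *v x)
           \<le> (c * (opnorm S)\<^sup>2 + \<epsilon> * opnorm F) * (x \<bullet> x)"
proof -
  have "x \<bullet> ((S ** diag2 d ** transpose S + \<epsilon> *\<^sub>R F) *v x)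
      = x \<bullet> ((S ** diag2 d ** transpose S) *v x) + \<epsilon> * (x \<bullet> (F *v x))"
    by (simp add: matrix_vector_mult_add_rdistrib inner_add_right flip: scaleR_matrix_vector_assoc)
  also have "\<dots> \<le> c * (opnorm S)\<^sup>2 * (x \<bullet> x) + \<epsilon> * (opnorm F * (x \<bullet> x))"
    using assms by (intro add_mono mult_left_mono quadratic_form_congruence_diag2_upper
        quadratic_form_le_opnorm) auto
  finally show ?thesis
    by (simp add: algebra_simps)
qed

lemma opnorm_le_of_quadratic_form_upper:
  assumes "\<And>i. m \<le> \<nu> i" "0 < m"
    and "\<And>x. x \<bullet> ((R ** diag2 \<nu> ** transpose R) *v x) \<le> K * (x \<bullet> x)"
  shows "opnorm R \<le> sqrt (K / m)"
proof -
  have "norm (transpose R *v x) \<le> sqrt (K / m) * norm x" for x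
  proof -
    let ?y = "transpose R *v x"
    have "m * (?y \<bullet> ?y) \<le> ?y \<bullet> (diag2 \<nu> *v ?y)"
      by (rule quadratic_form_diag2_lower) (rule assms(1))
    also have "\<dots> = x \<bullet> ((R ** diag2 \<nu> ** transpose R) *v x)"
      by (rule quadratic_form_congruence[symmetric])
    also have "\<dots> \<le> K * (x \<bullet> x)"
      by (rule assms(3))
    finally have "(norm ?y)\<^sup>2 \<le> K / m * (norm x)\<^sup>2"
      using assms(2) by (simp add: field_simps power2_norm_eq_inner)
    then show ?thesis
      by (metis norm_ge_zero real_sqrt_abs abs_of_nonneg real_sqrt_le_mono real_sqrt_mult)
  qed
  then have "opnorm (transpose R) \<le> sqrt (K / m)"
    by (rule opnorm_le)
  then show ?thesis
    by (simp add: opnorm_transpose)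
qed

lemma valid_cov_Williamson_ge_half:
  assumes "valid_cov M" "symplectic R" "\<And>j. 0 < \<nu> j" "M = R ** diag2 \<nu> ** transpose R"
  shows "1/2 \<le> \<nu> i"
proof -
  have "\<nu> i \<in> symplectic_eigenvalues M"
    unfolding symplectic_eigenvalues_def using assms(2-4) by blast
  then show ?thesis
    using assms(1) by (simp add: valid_cov_def)
qed

theorem mainTheorem8:
  fixes S R' F :: "real ^ ('n::finite + 'n) ^ ('n + 'n)"
    and f :: "'n \<Rightarrow> nat" and d' :: "'n \<Rightarrow> real" and s \<epsilon> :: real
  assumes "symplectic S"
    and "largest_singular_value S = exp s"
    and "\<epsilon> \<ge> 0"
    and "symmetric_mat F" and "opnorm F \<le> 1"
    and "valid_cov (S ** diag2 (\<lambda>i. 1/2 + real (f i)) ** transpose S + \<epsilon> *\<^sub>R F)"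
    and "symplectic R'"
    and "\<forall>i. d' i > 0"
    and "S ** diag2 (\<lambda>i. 1/2 + real (f i)) ** transpose S + \<epsilon> *\<^sub>R F
           = R' ** diag2 d' ** transpose R'"
  shows "opnorm R' = opnorm (matrix_inv R') \<and>
         opnorm R' \<le> sqrt (exp (2 * s) * (1 + 2 * real (Max (range f))) + 2 * \<epsilon>)"
proof -
  define fmax where "fmax = real (Max (range f))"
  define K where "K = (1/2 + fmax) * (exp s)\<^sup>2 + \<epsilon>"
  have half: "1/2 \<le> d' i" for i
    using assms(8) by (intro valid_cov_Williamson_ge_half[OF assms(6,7) _ assms(9)]) simp
  have "opnorm S = exp s"
    using assms(2) by (simp add: largest_singular_value_eq_opnorm)
  have form: "x \<bullet> ((R' ** diag2 d' ** transpose R') *v x) \<le> K * (x \<bullet> x)" for x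
  proof -
    have "x \<bullet> ((R' ** diag2 d' ** transpose R') *v x)
        \<le> ((1/2 + fmax) * (opnorm S)\<^sup>2 + \<epsilon> * opnorm F) * (x \<bullet> x)"
      unfolding assms(9)[symmetric] using assms(3)
      by (intro quadratic_form_perturbed_congruence_le) (simp_all add: fmax_def)
    also have "\<dots> \<le> K * (x \<bullet> x)"
      using assms(3,5) by (intro mult_right_mono) (simp_all add: K_def \<open>opnorm S = exp s\<close> mult_left_le)
    finally show ?thesis .
  qed
  have "opnorm R' \<le> sqrt (K / (1/2))"
    by (rule opnorm_le_of_quadratic_form_upper[OF half _ form]) simp
  moreover have "K / (1/2) = exp (2 * s) * (1 + 2 * fmax) + 2 * \<epsilon>"
    unfolding K_def exp_double by (simp add: algebra_simps)
  ultimately show ?thesis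
    using opnorm_matrix_inv_symplectic[OF assms(7)] by (simp add: fmax_def)
qed

end
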